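(* Let $\lambda\in\mathbb{C}$ and let $u,F,G:\mathbb{Z}^2\to\mathbb{C}$ with $u$ nonvanishing satisfy, for all $(l,m)\in\mathbb{Z}^2$, \[ \overline F=-\Big(\frac1u-\overline u\Big)F+\lambda G,\quad \overline G=F,\quad \widetilde F=-\frac1u F+\lambda G,\quad \widetilde G=F-uG. \] Then $G$ satisfies \[ \big(\widetilde{\overline G}-\lambda G\big)\big(\overline G-\widetilde G\big)+G\,\overline G=0 \] for all $(l,m)\in\mathbb{Z}^2$.
   Context: Shift notation: for $f:\mathbb{Z}^2\to\mathbb{C}$, $f=f_{l,m}$, $\overline f=f_{l+1,m}$, $\widetilde f=f_{l,m+1}$, $\widetilde{\overline f}=f_{l+1,m+1}$. *)

theory Defs
  imports Complex_Main
begin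

end

theory Submission
  imports Defs
begin

text \<open>With \<open>\<overline>G = F\<close> one gets
  \<open>\<widetilde>\<overline>G - \<lambda>G = -F/u\<close> and \<open>\<overline>G - \<widetilde>G = u G\<close>, whose product cancels \<open>G \<overline>G = G F\<close>.\<close>

theorem mainTheorem3:
  fixes lam :: complex and u F G :: "int \<Rightarrow> int \<Rightarrow> complex"
  assumes u_nz: "\<And>l m. u l m \<noteq> 0"
    and eq1: "\<And>l m. F (l+1) m = - (1 / u l m - u (l+1) m) * F l m + lam * G l m"
    and eq2: "\<And>l m. G (l+1) m = F l m"
    and eq3: "\<And>l m. F l (m+1) = - (1 / u l m) * F l m + lam * G l m"
    and eq4: "\<And>l m. G l (m+1) = F l m - u l m * G l m"
  shows "\<forall>l m. (G (l+1) (m+1) - lam * G l m) * (G (l+1) m - G l (m+1)) + G l m * G (l+1) m = 0"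
proof (intro allI)
  fix l m
  have shift_both: "G (l+1) (m+1) - lam * G l m = - F l m / u l m"
    using eq2[of l "m+1"] eq3[of l m] by simp
  have shift_diff: "G (l+1) m - G l (m+1) = u l m * G l m"
    using eq2[of l m] eq4[of l m] by (simp add: add.commute)
  have "(G (l+1) (m+1) - lam * G l m) * (G (l+1) m - G l (m+1)) + G l m * G (l+1) m
      = - F l m / u l m * (u l m * G l m) + G l m * F l m"
    using shift_both shift_diff eq2[of l m] by simp
  also have "\<dots> = 0"
    using u_nz[of l m] by (simp add: field_simps)
  finally show "(G (l+1) (m+1) - lam * G l m) * (G (l+1) m - G l (m+1)) + G l m * G (l+1) m = 0" .
qed

end
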